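(* Let $q$ be a prime power and let $\mathcal C\subseteq\mathbb F_q^n$ be an $\mathbb F_q$-linear code of dimension $k\ge 1$ with $4\le d_I(\mathcal C)\le 2n-2$. Then $d_I(\mathcal C)\le 2n-2k$.
   Context: For $\mathbf u,\mathbf v\in\mathbb F_q^n$, the insdel distance $d_I(\mathbf u,\mathbf v)$ is the minimum number of insertions and deletions transforming $\mathbf u$ into $\mathbf v$; equivalently $d_I(\mathbf u,\mathbf v)=2n-2\ell_{\rm LCS}(\mathbf u,\mathbf v)$ where $\ell_{\rm LCS}$ is the length of a longest common subsequence. $d_I(\mathcal C)$ is the minimum insdel distance between distinct codewords. *)

theory Defs
  imports Main "HOL.Vector_Spaces" "HOL-Library.Function_Algebras" "HOL-Library.Sublist"
begin

text \<open>Vectors of F_q^n are represented as functions nat => 'a vanishing at all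
  positions >= n; the word of such a vector is its list of the first n entries.
  F_q is an arbitrary finite field (its order q is automatically a prime power).\<close>

definition vscale :: "'a::field \<Rightarrow> (nat \<Rightarrow> 'a) \<Rightarrow> (nat \<Rightarrow> 'a)" where
  "vscale c u = (\<lambda>i. c * u i)"

definition Fqn :: "nat \<Rightarrow> (nat \<Rightarrow> 'a::field) set" where
  "Fqn n = {u. \<forall>i\<ge>n. u i = 0}"

definition word :: "nat \<Rightarrow> (nat \<Rightarrow> 'a) \<Rightarrow> 'a list" where
  "word n u = map u [0..<n]"

definition linear_code :: "nat \<Rightarrow> (nat \<Rightarrow> 'a::field) set \<Rightarrow> bool" where
  "linear_code n C \<longleftrightarrow> C \<subseteq> Fqn n \<and> Modules.module.subspace vscale C"

definition code_dim :: "(nat \<Rightarrow> 'a::field) set \<Rightarrow> nat" where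
  "code_dim C = Vector_Spaces.vector_space.dim vscale C"

definition lcs_len :: "'a list \<Rightarrow> 'a list \<Rightarrow> nat" where
  "lcs_len xs ys = Max {length zs | zs. subseq zs xs \<and> subseq zs ys}"

definition insdel_dist :: "nat \<Rightarrow> (nat \<Rightarrow> 'a) \<Rightarrow> (nat \<Rightarrow> 'a) \<Rightarrow> nat" where
  "insdel_dist n u v = 2 * n - 2 * lcs_len (word n u) (word n v)"

definition min_insdel :: "nat \<Rightarrow> (nat \<Rightarrow> 'a) set \<Rightarrow> nat" where
  "min_insdel n C = Min {insdel_dist n u v | u v. u \<in> C \<and> v \<in> C \<and> u \<noteq> v}"

end

theory Submission imports Defs "HOL-Library.FuncSet" begin

text \<open>A code of dimension k has at least q^k codewords, so either two codewords agree on the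
  first k coordinates (a common subsequence of length k), or every word of length k occurs as a
  prefix. In the latter case pick v with prefix 1 0 ... 0 and u whose prefix is v's window at
  positions 1..k; since k \<ge> 2 they differ at position 0, and again share a subsequence of length k.
  The hypothesis d_I \<ge> 4 rules out k \<ge> n, which would leave no room for the shifted window.\<close>

lemma vector_space_vscale: "vector_space (vscale :: 'a::field \<Rightarrow> (nat \<Rightarrow> 'a) \<Rightarrow> _)"
  by unfold_locales (auto simp: vscale_def algebra_simps fun_eq_iff)

lemma inj_on_word_Fqn: "inj_on (word n) (Fqn n)"
proof (rule inj_onI)
  fix u v :: "nat \<Rightarrow> 'a::field"
  assume "u \<in> Fqn n" "v \<in> Fqn n" "word n u = word n v"
  then show "u = v"
    by (auto simp: fun_eq_iff Fqn_def word_def map_eq_conv intro: linorder_not_le[THEN iffD1])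
qed

lemma finite_Fqn: "finite (Fqn n :: (nat \<Rightarrow> 'a::{field,finite}) set)"
proof (rule finite_imageD[OF _ inj_on_word_Fqn])
  have "word n ` Fqn n \<subseteq> {xs. set xs \<subseteq> (UNIV::'a set) \<and> length xs = n}"
    by (auto simp: word_def)
  then show "finite (word n ` (Fqn n :: (nat \<Rightarrow> 'a) set))"
    by (rule finite_subset) (rule finite_lists_length_eq[OF finite_UNIV])
qed

text \<open>A basis B gives an injection of the coordinate vectors B \<rightarrow> F into the subspace.\<close>

lemma card_scalars_pow_dim_le_card:
  fixes scale :: "'a::{field,finite} \<Rightarrow> 'b::ab_group_add \<Rightarrow> 'b"
  assumes vs: "vector_space scale" and S: "module.subspace scale S" and fin: "finite S"
  shows "card (UNIV :: 'a set) ^ vector_space.dim scale S \<le> card S"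
proof -
  interpret V: vector_space scale by (rule vs)
  obtain B where BS: "B \<subseteq> S" and ind: "V.independent B" and cB: "card B = V.dim S"
    by (rule V.basis_exists) blast
  have finB: "finite B" using BS fin by (rule finite_subset)
  define comb where "comb f = (\<Sum>b\<in>B. scale (f b) b)" for f
  have "comb ` (B \<rightarrow>\<^sub>E UNIV) \<subseteq> S"
    using BS by (auto simp: comb_def intro!: V.subspace_sum[OF S] V.subspace_scale[OF S])
  moreover have "inj_on comb (B \<rightarrow>\<^sub>E UNIV)"
  proof (rule inj_onI)
    fix f g assume f: "f \<in> B \<rightarrow>\<^sub>E UNIV" and g: "g \<in> B \<rightarrow>\<^sub>E UNIV" and "comb f = comb g"
    then have "(\<Sum>b\<in>B. scale (f b - g b) b) = 0"
      by (simp add: comb_def V.scale_left_diff_distrib sum_subtractf)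
    then have "\<forall>b\<in>B. f b - g b = 0"
      using V.independentD[OF ind finB order_refl, where u="\<lambda>b. f b - g b"] by blast
    then show "f = g" using f g by (intro PiE_ext) auto
  qed
  ultimately have "card (B \<rightarrow>\<^sub>E (UNIV::'a set)) \<le> card S"
    using card_inj_on_le fin by blast
  then show ?thesis using finB cB by (simp add: card_PiE)
qed

lemma lcs_len_ge:
  assumes "subseq zs xs" "subseq zs ys"
  shows "length zs \<le> lcs_len xs ys"
proof -
  have "{length zs | zs. subseq zs xs \<and> subseq zs ys} \<subseteq> {..length xs}"
    using list_emb_length by fastforce
  then show ?thesis
    unfolding lcs_len_def using assms by (intro Max_ge) (auto intro: finite_subset)
qed

lemma min_insdel_le_common_subseq:
  assumes "u \<in> C" "v \<in> C" "u \<noteq> v" "subseq zs (word n u)" "subseq zs (word n v)"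
  shows "min_insdel n C \<le> 2 * n - 2 * length zs"
proof -
  have fin: "finite {insdel_dist n u v | u v. u \<in> C \<and> v \<in> C \<and> u \<noteq> v}"
    by (rule finite_subset[of _ "{..2*n}"]) (auto simp: insdel_dist_def)
  have "min_insdel n C \<le> insdel_dist n u v"
    unfolding min_insdel_def using assms(1-3) by (intro Min_le[OF fin]) auto
  also have "\<dots> \<le> 2 * n - 2 * length zs"
    using lcs_len_ge[OF assms(4,5)] unfolding insdel_dist_def by linarith
  finally show ?thesis .
qed

lemma subseq_window_word:
  assumes "i + m \<le> n"
  shows "subseq (map (\<lambda>j. u (i + j)) [0..<m]) (word n u)"
proof -
  have "[0..<n] = [0..<i] @ [i..<i + m] @ [i + m..<n]"
  proof -
    have "[0..<n] = [0..<i] @ [i..<n]"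
      using upt_add_eq_append[of 0 i "n - i"] assms by simp
    also have "[i..<n] = [i..<i + m] @ [i + m..<n]"
      using upt_add_eq_append[of i "i + m" "n - (i + m)"] assms by simp
    finally show ?thesis .
  qed
  moreover have "map (\<lambda>j. u (i + j)) [0..<m] = map u [i..<i + m]"
    by (rule nth_equalityI) auto
  ultimately have "sublist (map (\<lambda>j. u (i + j)) [0..<m]) (word n u)"
    unfolding word_def sublist_def by auto
  then show ?thesis by blast
qed

lemma min_insdel_le_common_window:
  assumes "u \<in> C" "v \<in> C" "u \<noteq> v" "i + m \<le> n" "j + m \<le> n"
    and "\<forall>l<m. u (i + l) = v (j + l)"
  shows "min_insdel n C \<le> 2 * n - 2 * m"
proof -
  have windows_eq: "map (\<lambda>l. u (i + l)) [0..<m] = map (\<lambda>l. v (j + l)) [0..<m]"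
    using assms(6) by simp
  have "subseq (map (\<lambda>l. u (i + l)) [0..<m]) (word n v)"
    unfolding windows_eq by (rule subseq_window_word[OF assms(5)])
  then show ?thesis
    using min_insdel_le_common_subseq[OF assms(1-3) subseq_window_word[OF assms(4)]] by simp
qed

lemma prefix_image_eq_lists:
  fixes C :: "(nat \<Rightarrow> 'a::finite) set"
  assumes "finite C" "card (UNIV :: 'a set) ^ k \<le> card C" "inj_on (\<lambda>u. map u [0..<k]) C"
  shows "(\<lambda>u. map u [0..<k]) ` C = {xs. length xs = k}"
proof (rule card_seteq)
  show "finite {xs :: 'a list. length xs = k}"
    using finite_lists_length_eq[of "UNIV :: 'a set" k] by simp
  show "(\<lambda>u. map u [0..<k]) ` C \<subseteq> {xs. length xs = k}" by auto
  show "card {xs :: 'a list. length xs = k} \<le> card ((\<lambda>u. map u [0..<k]) ` C)"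
    using card_lists_length_eq[of "UNIV :: 'a set" k] card_image[OF assms(3)] assms(2) by simp
qed

lemma min_insdel_le_of_card_ge:
  fixes C :: "(nat \<Rightarrow> 'a::{zero_neq_one,finite}) set"
  assumes fin: "finite C" and card: "card (UNIV :: 'a set) ^ k \<le> card C"
    and "2 \<le> k" "k < n"
  shows "min_insdel n C \<le> 2 * n - 2 * k"
proof (cases "inj_on (\<lambda>u. map u [0..<k]) C")
  case False
  then obtain u v where "u \<in> C" "v \<in> C" "u \<noteq> v" "map u [0..<k] = map v [0..<k]"
    by (auto simp: inj_on_def)
  then show ?thesis
    using min_insdel_le_common_window[of u C v 0 k n 0] \<open>k < n\<close> by simp
next
  case True
  have prefixes: "\<exists>u\<in>C. \<forall>l<k. u l = f l" for f
  proof -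
    have "map f [0..<k] \<in> (\<lambda>u. map u [0..<k]) ` C"
      using prefix_image_eq_lists[OF fin card True] by simp
    then obtain u where "u \<in> C" "map f [0..<k] = map u [0..<k]" by blast
    then show ?thesis unfolding map_eq_conv by auto
  qed
  obtain v where v: "v \<in> C" "\<forall>l<k. v l = (if l = 0 then 1 else 0)"
    using prefixes[of "\<lambda>l. if l = 0 then 1 else 0"] by blast
  obtain u where u: "u \<in> C" "\<forall>l<k. u l = v (1 + l)"
    using prefixes[of "\<lambda>l. v (1 + l)"] by blast
  have "u 0 = v 1" "v 1 = 0" "v 0 = 1"
    using u(2) v(2) \<open>2 \<le> k\<close> by auto
  then have "u \<noteq> v" by auto
  then show ?thesis
    using min_insdel_le_common_window[OF u(1) v(1), of 0 k n 1] u(2) \<open>k < n\<close> by simp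
qed

theorem corollary3p7:
  fixes C :: "(nat \<Rightarrow> 'a::{field,finite}) set" and n k :: nat
  assumes "linear_code n C"
    and "code_dim C = k"
    and "k \<ge> 1"
    and "4 \<le> min_insdel n C"
    and "min_insdel n C \<le> 2 * n - 2"
  shows "min_insdel n C \<le> 2 * n - 2 * k"
proof (cases "k = 1")
  case True
  then show ?thesis using assms(5) by simp
next
  case False
  then have "2 \<le> k" using assms(3) by simp
  have "C \<subseteq> Fqn n" and subspace: "module.subspace vscale C"
    using assms(1) unfolding linear_code_def by auto
  then have fin: "finite C" using finite_Fqn finite_subset by blast
  have card: "card (UNIV :: 'a set) ^ k \<le> card C"
    using card_scalars_pow_dim_le_card[OF vector_space_vscale subspace fin] assms(2)
    by (simp add: code_dim_def)
  have "3 \<le> n" using assms(4,5) by linarith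
  have "k < n"
  proof (rule ccontr)
    assume "\<not> k < n"
    then have "card (UNIV :: 'a set) ^ (n - 1) \<le> card (UNIV :: 'a set) ^ k"
      by (intro power_increasing) (simp_all add: Suc_leI finite_UNIV_card_ge_0)
    then have "card (UNIV :: 'a set) ^ (n - 1) \<le> card C"
      using card by linarith
    then have "min_insdel n C \<le> 2 * n - 2 * (n - 1)"
      using min_insdel_le_of_card_ge[OF fin] \<open>3 \<le> n\<close> by simp
    then show False using assms(4) \<open>3 \<le> n\<close> by linarith
  qed
  then show ?thesis using min_insdel_le_of_card_ge[OF fin card \<open>2 \<le> k\<close>] by blast
qed

end
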